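(* Fix a finite number $E$ of observed environments $\mathcal{E}_{obs}=\{1,\dots,E\}$ and take the collection of environments of interest to be $\mathcal{E}=\mathcal{E}_{obs}$, with $p(e)$ the uniform distribution on $\mathcal{E}_{obs}$. In the setting described in the context, assume: (Invariance) there exists $z^*\in\{0,1\}^p$ such that $p_e(y\mid x^{z^*})$ is the same for all $e\in\mathcal{E}_{obs}$; (Uniqueness) this $z^*$ is unique; (Prior positivity) $p(z^* )>0$; (Estimation consistency given fixed environments) for every $z$ with $p(z)>0$, as $n\to\infty$, $$\frac{1}{nE}\sum_{i=1}^n\sum_{e=1}^E\log\hat p_e(y_{ei}\mid x_{ei}^z)\xrightarrow{P}\mathbb{E}_{p(e)p_e(y,x^z)}[\log p_e(y\mid x^z)],\qquad \frac{1}{nE}\sum_{i=1}^n\sum_{e=1}^E\log\hat g(y_{ei}\mid x_{ei}^z)\xrightarrow{P}\mathbb{E}_{p(e)p_e(y,x^z)}[\log g(y\mid x^z)].$$ Then, as $n\to\infty$ (with $E$ fixed): (i) $\hat z_{n,E}:=\arg\max_z\hat p(z\mid\mathcal{D})\xrightarrow{P}z^*$; and (ii) $\hat p(z^*\mid\mathcal{D})\xrightarrow{P}1$.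
   Context: Features $x\in\mathbb{R}^p$, outcome $y$. For $z\in\{0,1\}^p$, $x^z$ is the subvector of coordinates $j$ with $z^{(j)}=1$ and $x^{-z}$ the rest. Each environment $e$ has a joint density $p_e(x,y)$, from which $p_e(x^z)$, $p_e(y\mid x^z)$ are derived. The pooled conditional is $g(y\mid x^z):=\frac{\sum_{e=1}^E\int p_e(x,y)\,\mathrm{d}x^{-z}}{\sum_{e=1}^E p_e(x^z)}$. Data: in each environment $e=1,\dots,E$, $n$ i.i.d. observations $(x_{ei},y_{ei})$ drawn from $p_e(x,y)$; $\mathcal{D}$ is all data. A prior $p(z)$ on $\{0,1\}^p$ is given. For each $z$ a model class $\mathcal{P}_{y\mid x^z}$ is fixed; $\hat p_e(y\mid x^z)$ maximizes $\sum_{i=1}^n\log\tilde p(y_{ei}\mid x_{ei}^z)$ and $\hat g(y\mid x^z)$ maximizes $\sum_{e=1}^E\sum_{i=1}^n\log\tilde p(y_{ei}\mid x_{ei}^z)$ over $\tilde p\in\mathcal{P}_{y\mid x^z}$. The estimated BIP posterior is $\hat p(z\mid\mathcal{D})\propto p(z)\prod_{e=1}^E\prod_{i=1}^n\frac{\hat g(y_{ei}\mid x_{ei}^z)}{\hat p_e(y_{ei}\mid x_{ei}^z)}$. *)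

theory Defs
  imports "HOL-Probability.Probability"
begin

text \<open>Features x are functions nat => real, meaningful on coordinates {..<p}
  (elements of PiE {..<p} UNIV).  A selection z in {0,1}^p is a subset of {..<p};
  x^z is the restriction of x to z.  The outcome y lives in a measure space nu, and
  joint densities p_e(x,y) are taken w.r.t. (Lebesgue on R^p) x nu.
  Environments are indexed by e in {..<E}.\<close>

definition xsub :: "nat set \<Rightarrow> (nat \<Rightarrow> real) \<Rightarrow> (nat \<Rightarrow> real)" where
  "xsub z x = restrict x z"

definition Xmeas :: "nat \<Rightarrow> (nat \<Rightarrow> real) measure" where
  "Xmeas p = PiM {..<p} (\<lambda>_. lborel)"

definition XZYmeas :: "nat set \<Rightarrow> 'y measure \<Rightarrow> ((nat \<Rightarrow> real) \<times> 'y) measure" where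
  "XZYmeas z \<nu> = (PiM z (\<lambda>_. lborel)) \<Otimes>\<^sub>M \<nu>"

definition joint_z :: "nat \<Rightarrow> ((nat \<Rightarrow> real) \<Rightarrow> 'y \<Rightarrow> real) \<Rightarrow> nat set
    \<Rightarrow> (nat \<Rightarrow> real) \<Rightarrow> 'y \<Rightarrow> real" where
  "joint_z p f z xz y =
     (\<integral>x'. f (merge z ({..<p} - z) (xz, x')) y \<partial>(PiM ({..<p} - z) (\<lambda>_. lborel)))"

definition marg_z :: "nat \<Rightarrow> 'y measure \<Rightarrow> ((nat \<Rightarrow> real) \<Rightarrow> 'y \<Rightarrow> real) \<Rightarrow> nat set
    \<Rightarrow> (nat \<Rightarrow> real) \<Rightarrow> real" where
  "marg_z p \<nu> f z xz = (\<integral>y. joint_z p f z xz y \<partial>\<nu>)"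

definition cond_z :: "nat \<Rightarrow> 'y measure \<Rightarrow> ((nat \<Rightarrow> real) \<Rightarrow> 'y \<Rightarrow> real) \<Rightarrow> nat set
    \<Rightarrow> (nat \<Rightarrow> real) \<Rightarrow> 'y \<Rightarrow> real" where
  "cond_z p \<nu> f z xz y = joint_z p f z xz y / marg_z p \<nu> f z xz"

definition pooled_z :: "nat \<Rightarrow> 'y measure \<Rightarrow> nat \<Rightarrow> (nat \<Rightarrow> (nat \<Rightarrow> real) \<Rightarrow> 'y \<Rightarrow> real)
    \<Rightarrow> nat set \<Rightarrow> (nat \<Rightarrow> real) \<Rightarrow> 'y \<Rightarrow> real" where
  "pooled_z p \<nu> E pd z xz y =
     (\<Sum>e<E. joint_z p (pd e) z xz y) / (\<Sum>e<E. marg_z p \<nu> (pd e) z xz)"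

text \<open>Invariance: p_e(y|x^z) is the same (conditional density) q(y|x^z) for all e,
  i.e. p_e(x^z,y) = p_e(x^z) q(y|x^z) almost everywhere, for every e.\<close>
definition invariant_z :: "nat \<Rightarrow> 'y measure \<Rightarrow> nat \<Rightarrow> (nat \<Rightarrow> (nat \<Rightarrow> real) \<Rightarrow> 'y \<Rightarrow> real)
    \<Rightarrow> nat set \<Rightarrow> bool" where
  "invariant_z p \<nu> E pd z \<longleftrightarrow>
     (\<exists>q. \<forall>e<E. AE w in XZYmeas z \<nu>.
        joint_z p (pd e) z (fst w) (snd w) = marg_z p \<nu> (pd e) z (fst w) * q (fst w) (snd w))"

definition distr_z :: "nat \<Rightarrow> 'y measure \<Rightarrow> ((nat \<Rightarrow> real) \<Rightarrow> 'y \<Rightarrow> real) \<Rightarrow> nat set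
    \<Rightarrow> ((nat \<Rightarrow> real) \<times> 'y) measure" where
  "distr_z p \<nu> f z = density (XZYmeas z \<nu>) (\<lambda>w. ennreal (joint_z p f z (fst w) (snd w)))"

text \<open>E_{p(e) p_e(y,x^z)}[log p_e(y|x^z)] with p(e) uniform on the E environments\<close>
definition exp_log_cond :: "nat \<Rightarrow> 'y measure \<Rightarrow> nat \<Rightarrow> (nat \<Rightarrow> (nat \<Rightarrow> real) \<Rightarrow> 'y \<Rightarrow> real)
    \<Rightarrow> nat set \<Rightarrow> real" where
  "exp_log_cond p \<nu> E pd z = (1 / real E) *
     (\<Sum>e<E. \<integral>w. ln (cond_z p \<nu> (pd e) z (fst w) (snd w)) \<partial>(distr_z p \<nu> (pd e) z))"

definition exp_log_pooled :: "nat \<Rightarrow> 'y measure \<Rightarrow> nat \<Rightarrow> (nat \<Rightarrow> (nat \<Rightarrow> real) \<Rightarrow> 'y \<Rightarrow> real)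
    \<Rightarrow> nat set \<Rightarrow> real" where
  "exp_log_pooled p \<nu> E pd z = (1 / real E) *
     (\<Sum>e<E. \<integral>w. ln (pooled_z p \<nu> E pd z (fst w) (snd w)) \<partial>(distr_z p \<nu> (pd e) z))"

definition elog :: "real \<Rightarrow> ereal" where
  "elog x = (if 0 < x then ereal (ln x) else -\<infinity>)"

definition conv_in_prob :: "'w measure \<Rightarrow> (nat \<Rightarrow> 'w \<Rightarrow> ereal) \<Rightarrow> real \<Rightarrow> bool" where
  "conv_in_prob M Z c \<longleftrightarrow>
     (\<forall>\<epsilon>>0. (\<lambda>n. measure M {\<omega> \<in> space M. ereal \<epsilon> < \<bar>Z n \<omega> - ereal c\<bar>}) \<longlonglongrightarrow> 0)"

text \<open>Estimated BIP posterior hat p(z | D) for the data D_n (first n samples of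
  each environment), normalised over z in Zs = {0,1}^p.\<close>
definition bip_weight where
  "bip_weight E prior phat ghat X Y n \<omega> z =
     prior z * (\<Prod>e<E. \<Prod>i<n.
        ghat n z \<omega> (xsub z (X e i \<omega>)) (Y e i \<omega>) / phat n e z \<omega> (xsub z (X e i \<omega>)) (Y e i \<omega>))"

definition bip_post where
  "bip_post Zs E prior phat ghat X Y n \<omega> z =
     bip_weight E prior phat ghat X Y n \<omega> z / (\<Sum>z'\<in>Zs. bip_weight E prior phat ghat X Y n \<omega> z')"

end

(* Write Delta(z) for the environment average of E[log g(y | x^z)] - E[log p_e(y | x^z)], the
   limit of the normalised log-ratio in the BIP weight of z.  In each environment the function
   p_e(x^z) g(y | x^z) is a sub-probability density, so Gibbs' inequality gives Delta(z) <= 0, with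
   equality iff every p_e(x^z, y) factorises as p_e(x^z) g(y | x^z), i.e. iff z is invariant.
   Hence zstar is the strict maximiser of Delta among the finitely many z of positive prior, with
   some gap delta.  Whenever all empirical mean log-likelihoods are within delta/8 of their
   limits, the weight of every z <> zstar is at most prior(z)/prior(zstar) exp(-n delta/2) times the
   weight of zstar; by consistency this happens with probability tending to 1, which yields both
   the consistency of the MAP estimate and the concentration of the posterior on zstar. *)

theory Submission
  imports Defs
begin

section \<open>Gibbs' inequality\<close>

lemma (in prob_space) integral_ln_le_integral_minus_one:
  fixes D :: "'a \<Rightarrow> real"
  assumes D: "integrable M D" and ln_D: "integrable M (\<lambda>w. ln (D w))"
    and D_pos: "AE w in M. 0 < D w"
  shows "(\<integral>w. ln (D w) \<partial>M) \<le> (\<integral>w. D w \<partial>M) - 1"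
    and "(\<integral>w. ln (D w) \<partial>M) = (\<integral>w. D w \<partial>M) - 1 \<longleftrightarrow> (AE w in M. D w = 1)"
proof -
  define \<phi> where "\<phi> w = D w - 1 - ln (D w)" for w
  have \<phi>: "integrable M \<phi>"
    unfolding \<phi>_def using D ln_D by simp
  have \<phi>_nonneg: "AE w in M. 0 \<le> \<phi> w"
    using D_pos by eventually_elim (simp add: \<phi>_def ln_le_minus_one)
  have integral_\<phi>: "(\<integral>w. \<phi> w \<partial>M) = (\<integral>w. D w \<partial>M) - 1 - (\<integral>w. ln (D w) \<partial>M)"
    unfolding \<phi>_def using D ln_D by (simp add: prob_space)
  show "(\<integral>w. ln (D w) \<partial>M) \<le> (\<integral>w. D w \<partial>M) - 1"
    using integral_nonneg_AE[OF \<phi>_nonneg] integral_\<phi> by linarith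
  have "AE w in M. \<phi> w = 0 \<longleftrightarrow> D w = 1"
    using D_pos by eventually_elim (auto simp: \<phi>_def dest: ln_eq_minus_one)
  then have "(AE w in M. \<phi> w = 0) \<longleftrightarrow> (AE w in M. D w = 1)"
    by auto
  then show "(\<integral>w. ln (D w) \<partial>M) = (\<integral>w. D w \<partial>M) - 1 \<longleftrightarrow> (AE w in M. D w = 1)"
    using integral_nonneg_eq_0_iff_AE[OF \<phi> \<phi>_nonneg] integral_\<phi> by auto
qed

lemma AE_eq_if_eq_on_support:
  fixes N :: "'a measure" and f h :: "'a \<Rightarrow> real"
  assumes [measurable]: "f \<in> borel_measurable N" "h \<in> borel_measurable N"
    and f_nonneg: "\<And>w. 0 \<le> f w" and h_nonneg: "\<And>w. 0 \<le> h w"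
    and f_total: "(\<integral>\<^sup>+w. ennreal (f w) \<partial>N) = 1"
    and h_total: "(\<integral>\<^sup>+w. ennreal (h w) \<partial>N) \<le> 1"
    and on_support: "AE w in N. 0 < f w \<longrightarrow> h w = f w"
  shows "AE w in N. f w = h w"
proof -
  define k where "k w = (if f w = 0 then h w else 0)" for w
  have "AE w in N. ennreal (h w) = ennreal (f w) + ennreal (k w)"
    using on_support
  proof eventually_elim
    case (elim w)
    then show ?case
      using f_nonneg[of w] h_nonneg[of w] by (cases "f w = 0") (auto simp: k_def)
  qed
  then have "(\<integral>\<^sup>+w. ennreal (h w) \<partial>N) = 1 + (\<integral>\<^sup>+w. ennreal (k w) \<partial>N)"
    using f_total by (simp add: nn_integral_cong_AE nn_integral_add k_def)
  then have "(\<integral>\<^sup>+w. ennreal (k w) \<partial>N) = 0"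
    using h_total ennreal_add_left_cancel_le[of 1 _ 0] by simp
  then have "AE w in N. ennreal (k w) = 0"
    by (subst (asm) nn_integral_0_iff_AE) (simp_all add: k_def)
  with on_support show ?thesis
  proof eventually_elim
    case (elim w)
    then show ?case
      using f_nonneg[of w] h_nonneg[of w] by (cases "f w = 0") (auto simp: k_def)
  qed
qed

lemma integrable_integral_diff_AE:
  fixes f g h :: "'a \<Rightarrow> real"
  assumes f: "integrable M f" and g: "integrable M g" and h: "h \<in> borel_measurable M"
    and eq: "AE x in M. f x - g x = h x"
  shows "integrable M h" and "(\<integral>x. f x \<partial>M) - (\<integral>x. g x \<partial>M) = (\<integral>x. h x \<partial>M)"
proof -
  have fg: "integrable M (\<lambda>x. f x - g x)"
    using f g by simp
  then show "integrable M h"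
    using h eq by (rule integrable_cong_AE_imp)
  have "(\<integral>x. f x \<partial>M) - (\<integral>x. g x \<partial>M) = (\<integral>x. f x - g x \<partial>M)"
    using f g by (rule Bochner_Integration.integral_diff[symmetric])
  also have "\<dots> = (\<integral>x. h x \<partial>M)"
    using borel_measurable_integrable[OF fg] h eq by (rule integral_cong_AE)
  finally show "(\<integral>x. f x \<partial>M) - (\<integral>x. g x \<partial>M) = (\<integral>x. h x \<partial>M)" .
qed

lemma gibbs_inequality:
  fixes N :: "'a measure" and f h :: "'a \<Rightarrow> real"
  assumes [measurable]: "f \<in> borel_measurable N" "h \<in> borel_measurable N"
    and f_nonneg: "\<And>w. 0 \<le> f w" and h_nonneg: "\<And>w. 0 \<le> h w"
    and f_total: "(\<integral>\<^sup>+w. ennreal (f w) \<partial>N) = 1"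
    and h_total: "(\<integral>\<^sup>+w. ennreal (h w) \<partial>N) \<le> 1"
    and h_pos: "AE w in N. 0 < f w \<longrightarrow> 0 < h w"
    and ln_integrable: "integrable (density N (\<lambda>w. ennreal (f w))) (\<lambda>w. ln (h w / f w))"
  shows "(\<integral>w. ln (h w / f w) \<partial>density N (\<lambda>w. ennreal (f w))) \<le> 0"
    and "(\<integral>w. ln (h w / f w) \<partial>density N (\<lambda>w. ennreal (f w))) = 0 \<longleftrightarrow> (AE w in N. f w = h w)"
proof -
  define \<mu> where "\<mu> = density N (\<lambda>w. ennreal (f w))"
  define D where "D w = h w / f w" for w
  have [measurable]: "D \<in> borel_measurable N" "D \<in> borel_measurable \<mu>"
    unfolding \<mu>_def D_def by simp_all
  have D_nonneg: "0 \<le> D w" for w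
    unfolding D_def using f_nonneg h_nonneg by simp
  interpret \<mu>: prob_space \<mu>
    by standard (simp add: \<mu>_def emeasure_density f_total)
  have D_pos: "AE w in \<mu>. 0 < D w"
    unfolding \<mu>_def using h_pos by (subst AE_density) (auto simp: D_def)
  have nn_integral_D: "(\<integral>\<^sup>+w. ennreal (D w) \<partial>\<mu>) = (\<integral>\<^sup>+w. ennreal (f w) * ennreal (D w) \<partial>N)"
    unfolding \<mu>_def by (rule nn_integral_density) simp_all
  also have "\<dots> \<le> (\<integral>\<^sup>+w. ennreal (h w) \<partial>N)"
    using f_nonneg h_nonneg by (intro nn_integral_mono) (simp add: D_def ennreal_mult[symmetric])
  finally have D_le_1: "(\<integral>\<^sup>+w. ennreal (D w) \<partial>\<mu>) \<le> 1"
    using h_total by simp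
  have D_integrable: "integrable \<mu> D"
    using D_le_1 D_nonneg
    by (intro integrableI_bounded) (auto simp: top.not_eq_extremum intro: le_less_trans)
  have integral_D: "ennreal (\<integral>w. D w \<partial>\<mu>) = (\<integral>\<^sup>+w. ennreal (D w) \<partial>\<mu>)"
    using D_integrable D_nonneg by (intro nn_integral_eq_integral[symmetric]) auto
  have ln_D: "integrable \<mu> (\<lambda>w. ln (D w))"
    using ln_integrable by (simp add: \<mu>_def D_def)
  note ln_bound = \<mu>.integral_ln_le_integral_minus_one[OF D_integrable ln_D D_pos]
  have "(\<integral>w. D w \<partial>\<mu>) \<le> 1"
    using integral_D D_le_1 by (metis ennreal_le_1)
  then show "(\<integral>w. ln (h w / f w) \<partial>density N (\<lambda>w. ennreal (f w))) \<le> 0"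
    using ln_bound(1) by (simp add: \<mu>_def D_def)
  show "(\<integral>w. ln (h w / f w) \<partial>density N (\<lambda>w. ennreal (f w))) = 0 \<longleftrightarrow> (AE w in N. f w = h w)"
  proof
    assume "AE w in N. f w = h w"
    then have "AE w in \<mu>. ln (D w) = 0"
      unfolding \<mu>_def by (subst AE_density) (auto simp: D_def)
    then show "(\<integral>w. ln (h w / f w) \<partial>density N (\<lambda>w. ennreal (f w))) = 0"
      using integral_cong_AE[of "\<lambda>w. ln (D w)" \<mu> "\<lambda>_. 0"] by (simp add: \<mu>_def D_def)
  next
    assume "(\<integral>w. ln (h w / f w) \<partial>density N (\<lambda>w. ennreal (f w))) = 0"
    then have "(\<integral>w. ln (D w) \<partial>\<mu>) = 0"
      by (simp add: \<mu>_def D_def)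
    with ln_bound \<open>(\<integral>w. D w \<partial>\<mu>) \<le> 1\<close> have "AE w in \<mu>. D w = 1"
      by linarith
    then have "AE w in N. 0 < f w \<longrightarrow> h w = f w"
      unfolding \<mu>_def by (subst (asm) AE_density) (auto simp: D_def)
    from AE_eq_if_eq_on_support[OF _ _ f_nonneg h_nonneg f_total h_total this]
    show "AE w in N. f w = h w"
      by simp
  qed
qed

section \<open>Pooled conditional densities\<close>

definition pooled_density :: "'i set \<Rightarrow> ('i \<Rightarrow> 'a \<Rightarrow> 'b \<Rightarrow> real) \<Rightarrow> ('i \<Rightarrow> 'a \<Rightarrow> real) \<Rightarrow> 'a \<Rightarrow> 'b \<Rightarrow> real"
  where "pooled_density I F m x y = (\<Sum>i\<in>I. F i x y) / (\<Sum>i\<in>I. m i x)"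

lemma pooled_density_nonneg:
  assumes "\<And>i x y. i \<in> I \<Longrightarrow> 0 \<le> F i x y" "\<And>i x. i \<in> I \<Longrightarrow> 0 \<le> m i x"
  shows "0 \<le> pooled_density I F m x y"
  unfolding pooled_density_def using assms by (simp add: sum_nonneg)

lemma AE_pos_density_imp_pos_marginal:
  fixes A :: "'a measure" and B :: "'b measure" and F :: "'a \<Rightarrow> 'b \<Rightarrow> real" and m :: "'a \<Rightarrow> real"
  assumes "sigma_finite_measure A" "sigma_finite_measure B"
    and F[measurable]: "(\<lambda>w. F (fst w) (snd w)) \<in> borel_measurable (A \<Otimes>\<^sub>M B)"
    and [measurable]: "m \<in> borel_measurable A"
    and marginal: "AE x in A. ennreal (m x) = (\<integral>\<^sup>+y. ennreal (F x y) \<partial>B)"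
  shows "AE w in A \<Otimes>\<^sub>M B. 0 < F (fst w) (snd w) \<longrightarrow> 0 < m (fst w)"
proof -
  interpret pair_sigma_finite A B
    using assms(1,2) by (simp add: pair_sigma_finite_def)
  have "AE x in A. AE y in B. 0 < F x y \<longrightarrow> 0 < m x"
    using marginal AE_space
  proof eventually_elim
    case (elim x)
    have [measurable]: "(\<lambda>y. F x y) \<in> borel_measurable B"
      using measurable_compose_Pair1[OF elim(2) F] by simp
    show ?case
    proof (cases "0 < m x")
      case False
      then have "(\<integral>\<^sup>+y. ennreal (F x y) \<partial>B) = 0"
        using elim(1) by (simp add: ennreal_neg)
      then have "AE y in B. ennreal (F x y) = 0"
        by (simp add: nn_integral_0_iff_AE)
      then show ?thesis
        by eventually_elim (simp add: ennreal_eq_0_iff)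
    qed simp
  qed
  then show ?thesis
    by (subst AE_pair_iff[symmetric]) simp_all
qed

lemma nn_integral_pooled_density_eq_1:
  fixes B :: "'b measure" and I :: "'i set" and F :: "'i \<Rightarrow> 'b \<Rightarrow> real" and m :: "'i \<Rightarrow> real"
  assumes "finite I"
    and [measurable]: "\<And>i. i \<in> I \<Longrightarrow> F i \<in> borel_measurable B"
    and F_nonneg: "\<And>i y. i \<in> I \<Longrightarrow> 0 \<le> F i y" and m_nonneg: "\<And>i. i \<in> I \<Longrightarrow> 0 \<le> m i"
    and marginal: "\<And>i. i \<in> I \<Longrightarrow> ennreal (m i) = (\<integral>\<^sup>+y. ennreal (F i y) \<partial>B)"
    and total_pos: "0 < (\<Sum>i\<in>I. m i)"
  shows "(\<integral>\<^sup>+y. ennreal ((\<Sum>i\<in>I. F i y) / (\<Sum>i\<in>I. m i)) \<partial>B) = 1"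
proof -
  have "(\<integral>\<^sup>+y. ennreal ((\<Sum>i\<in>I. F i y) / (\<Sum>i\<in>I. m i)) \<partial>B)
      = (\<integral>\<^sup>+y. (\<Sum>i\<in>I. ennreal (F i y)) * ennreal (1 / (\<Sum>i\<in>I. m i)) \<partial>B)"
    using F_nonneg total_pos by (intro nn_integral_cong) (simp add: ennreal_mult[symmetric] sum_nonneg)
  also have "\<dots> = (\<Sum>i\<in>I. \<integral>\<^sup>+y. ennreal (F i y) \<partial>B) * ennreal (1 / (\<Sum>i\<in>I. m i))"
    by (simp add: nn_integral_multc nn_integral_sum)
  also have "(\<Sum>i\<in>I. \<integral>\<^sup>+y. ennreal (F i y) \<partial>B) = ennreal (\<Sum>i\<in>I. m i)"
    using marginal m_nonneg by (simp flip: marginal)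
  also have "ennreal (\<Sum>i\<in>I. m i) * ennreal (1 / (\<Sum>i\<in>I. m i)) = 1"
    using total_pos by (subst ennreal_mult[symmetric]) auto
  finally show ?thesis .
qed

lemma nn_integral_marginal_times_pooled_density_le:
  fixes B :: "'b measure" and I :: "'i set" and F :: "'i \<Rightarrow> 'b \<Rightarrow> real" and m :: "'i \<Rightarrow> real"
  assumes "finite I" "i \<in> I"
    and [measurable]: "\<And>j. j \<in> I \<Longrightarrow> F j \<in> borel_measurable B"
    and F_nonneg: "\<And>j y. j \<in> I \<Longrightarrow> 0 \<le> F j y" and m_nonneg: "\<And>j. j \<in> I \<Longrightarrow> 0 \<le> m j"
    and marginal: "\<And>j. j \<in> I \<Longrightarrow> ennreal (m j) = (\<integral>\<^sup>+y. ennreal (F j y) \<partial>B)"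
  shows "(\<integral>\<^sup>+y. ennreal (m i * ((\<Sum>j\<in>I. F j y) / (\<Sum>j\<in>I. m j))) \<partial>B) \<le> ennreal (m i)"
proof (cases "m i = 0")
  case False
  then have "0 < (\<Sum>j\<in>I. m j)"
    using assms(1,2) m_nonneg by (intro sum_pos2[of I i]) (auto simp: order.order_iff_strict)
  then have "(\<integral>\<^sup>+y. ennreal ((\<Sum>j\<in>I. F j y) / (\<Sum>j\<in>I. m j)) \<partial>B) = 1"
    using assms by (intro nn_integral_pooled_density_eq_1) auto
  moreover have "(\<integral>\<^sup>+y. ennreal (m i * ((\<Sum>j\<in>I. F j y) / (\<Sum>j\<in>I. m j))) \<partial>B)
      = (\<integral>\<^sup>+y. ennreal (m i) * ennreal ((\<Sum>j\<in>I. F j y) / (\<Sum>j\<in>I. m j)) \<partial>B)"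
    using assms(2) F_nonneg m_nonneg
    by (intro nn_integral_cong ennreal_mult divide_nonneg_nonneg sum_nonneg) auto
  moreover have "\<dots> = ennreal (m i) * (\<integral>\<^sup>+y. ennreal ((\<Sum>j\<in>I. F j y) / (\<Sum>j\<in>I. m j)) \<partial>B)"
    using assms(1) by (intro nn_integral_cmult) measurable
  ultimately show ?thesis
    by simp
qed simp

lemma nn_integral_marginal_times_pooled_le:
  fixes A :: "'a measure" and B :: "'b measure" and I :: "'i set"
    and F :: "'i \<Rightarrow> 'a \<Rightarrow> 'b \<Rightarrow> real" and m :: "'i \<Rightarrow> 'a \<Rightarrow> real"
  assumes "sigma_finite_measure B" "finite I" "i \<in> I"
    and F[measurable]: "\<And>i. i \<in> I \<Longrightarrow> (\<lambda>w. F i (fst w) (snd w)) \<in> borel_measurable (A \<Otimes>\<^sub>M B)"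
    and [measurable]: "\<And>i. i \<in> I \<Longrightarrow> m i \<in> borel_measurable A"
    and F_nonneg: "\<And>i x y. i \<in> I \<Longrightarrow> 0 \<le> F i x y" and m_nonneg: "\<And>i x. i \<in> I \<Longrightarrow> 0 \<le> m i x"
    and marginal: "\<And>i. i \<in> I \<Longrightarrow> AE x in A. ennreal (m i x) = (\<integral>\<^sup>+y. ennreal (F i x y) \<partial>B)"
  shows "(\<integral>\<^sup>+w. ennreal (m i (fst w) * pooled_density I F m (fst w) (snd w)) \<partial>(A \<Otimes>\<^sub>M B))
      \<le> (\<integral>\<^sup>+w. ennreal (F i (fst w) (snd w)) \<partial>(A \<Otimes>\<^sub>M B))"
proof -
  interpret B: sigma_finite_measure B by fact
  have "(\<lambda>w. ennreal (m i (fst w) * pooled_density I F m (fst w) (snd w))) \<in> borel_measurable (A \<Otimes>\<^sub>M B)"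
    unfolding pooled_density_def using \<open>i \<in> I\<close> by measurable
  from B.nn_integral_fst[OF this]
  have "(\<integral>\<^sup>+w. ennreal (m i (fst w) * pooled_density I F m (fst w) (snd w)) \<partial>(A \<Otimes>\<^sub>M B))
      = (\<integral>\<^sup>+x. \<integral>\<^sup>+y. ennreal (m i x * pooled_density I F m x y) \<partial>B \<partial>A)"
    by simp
  also have "\<dots> \<le> (\<integral>\<^sup>+x. ennreal (m i x) \<partial>A)"
  proof (rule nn_integral_mono_AE)
    have "AE x in A. \<forall>j\<in>I. ennreal (m j x) = (\<integral>\<^sup>+y. ennreal (F j x y) \<partial>B)"
      using marginal \<open>finite I\<close> by (simp add: AE_finite_all)
    then show "AE x in A. (\<integral>\<^sup>+y. ennreal (m i x * pooled_density I F m x y) \<partial>B) \<le> ennreal (m i x)"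
      using AE_space
    proof eventually_elim
      case (elim x)
      have "F j x \<in> borel_measurable B" if "j \<in> I" for j
        using measurable_compose_Pair1[OF elim(2) F[OF that]] by simp
      then show ?case
        unfolding pooled_density_def using assms(2,3) F_nonneg m_nonneg elim(1)
        by (intro nn_integral_marginal_times_pooled_density_le) auto
    qed
  qed
  also have "\<dots> = (\<integral>\<^sup>+x. \<integral>\<^sup>+y. ennreal (F i x y) \<partial>B \<partial>A)"
    using marginal[OF \<open>i \<in> I\<close>] by (rule nn_integral_cong_AE)
  also have "\<dots> = (\<integral>\<^sup>+w. ennreal (F i (fst w) (snd w)) \<partial>(A \<Otimes>\<^sub>M B))"
    using B.nn_integral_fst[of "\<lambda>w. ennreal (F i (fst w) (snd w))" A] \<open>i \<in> I\<close> by simp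
  finally show ?thesis .
qed

lemma pooled_log_likelihood_le:
  fixes A :: "'a measure" and B :: "'b measure" and I :: "'i set"
    and F :: "'i \<Rightarrow> 'a \<Rightarrow> 'b \<Rightarrow> real" and m :: "'i \<Rightarrow> 'a \<Rightarrow> real"
  assumes A: "sigma_finite_measure A" and B: "sigma_finite_measure B" and I: "finite I" "i \<in> I"
    and F[measurable]: "\<And>i. i \<in> I \<Longrightarrow> (\<lambda>w. F i (fst w) (snd w)) \<in> borel_measurable (A \<Otimes>\<^sub>M B)"
    and m[measurable]: "\<And>i. i \<in> I \<Longrightarrow> m i \<in> borel_measurable A"
    and F_nonneg: "\<And>i x y. i \<in> I \<Longrightarrow> 0 \<le> F i x y" and m_nonneg: "\<And>i x. i \<in> I \<Longrightarrow> 0 \<le> m i x"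
    and marginal: "\<And>i. i \<in> I \<Longrightarrow> AE x in A. ennreal (m i x) = (\<integral>\<^sup>+y. ennreal (F i x y) \<partial>B)"
    and total: "(\<integral>\<^sup>+w. ennreal (F i (fst w) (snd w)) \<partial>(A \<Otimes>\<^sub>M B)) = 1"
  defines "\<mu> \<equiv> density (A \<Otimes>\<^sub>M B) (\<lambda>w. ennreal (F i (fst w) (snd w)))"
  assumes cond_integrable: "integrable \<mu> (\<lambda>w. ln (F i (fst w) (snd w) / m i (fst w)))"
    and pooled_integrable: "integrable \<mu> (\<lambda>w. ln (pooled_density I F m (fst w) (snd w)))"
  shows "(\<integral>w. ln (pooled_density I F m (fst w) (snd w)) \<partial>\<mu>)
      \<le> (\<integral>w. ln (F i (fst w) (snd w) / m i (fst w)) \<partial>\<mu>)"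
    and "(\<integral>w. ln (pooled_density I F m (fst w) (snd w)) \<partial>\<mu>)
      = (\<integral>w. ln (F i (fst w) (snd w) / m i (fst w)) \<partial>\<mu>) \<longleftrightarrow>
      (AE w in A \<Otimes>\<^sub>M B. F i (fst w) (snd w) = m i (fst w) * pooled_density I F m (fst w) (snd w))"
proof -
  define f where "f w = F i (fst w) (snd w)" for w
  define h where "h w = m i (fst w) * pooled_density I F m (fst w) (snd w)" for w
  have Fi: "(\<lambda>w. ennreal (F i (fst w) (snd w))) \<in> borel_measurable (A \<Otimes>\<^sub>M B)"
    using I by measurable
  have f_meas[measurable]: "f \<in> borel_measurable (A \<Otimes>\<^sub>M B)"
    and h_meas[measurable]: "h \<in> borel_measurable (A \<Otimes>\<^sub>M B)"
    unfolding f_def h_def pooled_density_def using I by measurable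
  have f_nonneg: "0 \<le> f w" and h_nonneg: "0 \<le> h w" for w
    unfolding f_def h_def using F_nonneg m_nonneg pooled_density_nonneg[of I F m] I by auto
  have pos: "AE w in A \<Otimes>\<^sub>M B. 0 < f w \<longrightarrow> 0 < m i (fst w) \<and> 0 < pooled_density I F m (fst w) (snd w)"
    using AE_pos_density_imp_pos_marginal[OF A B F m marginal, OF I(2) I(2) I(2)]
  proof eventually_elim
    case (elim w)
    have "0 < f w \<longrightarrow> 0 < (\<Sum>j\<in>I. F j (fst w) (snd w)) \<and> 0 < (\<Sum>j\<in>I. m j (fst w))"
      using elim I F_nonneg m_nonneg by (auto intro: sum_pos2 simp: f_def)
    then show ?case
      using elim by (simp add: f_def pooled_density_def)
  qed
  have ln_eq: "AE w in \<mu>. ln (pooled_density I F m (fst w) (snd w)) - ln (F i (fst w) (snd w) / m i (fst w))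
      = ln (h w / f w)"
    unfolding \<mu>_def using pos
    by (subst AE_density) (auto simp: Fi f_def h_def ln_div ln_mult)
  have "(\<lambda>w. ln (h w / f w)) \<in> borel_measurable \<mu>"
    unfolding \<mu>_def by simp
  note ln_ratio = integrable_integral_diff_AE[OF pooled_integrable cond_integrable this ln_eq]
  have "(\<integral>\<^sup>+w. ennreal (h w) \<partial>(A \<Otimes>\<^sub>M B)) \<le> (\<integral>\<^sup>+w. ennreal (F i (fst w) (snd w)) \<partial>(A \<Otimes>\<^sub>M B))"
    unfolding h_def
    by (rule nn_integral_marginal_times_pooled_le[OF B I]) (fact F m F_nonneg m_nonneg marginal)+
  then have h_total: "(\<integral>\<^sup>+w. ennreal (h w) \<partial>(A \<Otimes>\<^sub>M B)) \<le> 1"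
    using total by simp
  have h_pos: "AE w in A \<Otimes>\<^sub>M B. 0 < f w \<longrightarrow> 0 < h w"
    using pos by eventually_elim (simp add: h_def)
  have \<mu>_eq: "\<mu> = density (A \<Otimes>\<^sub>M B) (\<lambda>w. ennreal (f w))"
    by (simp add: \<mu>_def f_def)
  have f_total: "(\<integral>\<^sup>+w. ennreal (f w) \<partial>(A \<Otimes>\<^sub>M B)) = 1"
    using total by (simp add: f_def)
  note gibbs = gibbs_inequality[OF f_meas h_meas f_nonneg h_nonneg f_total h_total h_pos,
      folded \<mu>_eq, OF ln_ratio(1)]
  show "(\<integral>w. ln (pooled_density I F m (fst w) (snd w)) \<partial>\<mu>)
      \<le> (\<integral>w. ln (F i (fst w) (snd w) / m i (fst w)) \<partial>\<mu>)"
    using gibbs(1) ln_ratio(2) by simp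
  show "(\<integral>w. ln (pooled_density I F m (fst w) (snd w)) \<partial>\<mu>)
      = (\<integral>w. ln (F i (fst w) (snd w) / m i (fst w)) \<partial>\<mu>) \<longleftrightarrow>
      (AE w in A \<Otimes>\<^sub>M B. F i (fst w) (snd w) = m i (fst w) * pooled_density I F m (fst w) (snd w))"
  proof -
    have "(\<integral>w. ln (pooled_density I F m (fst w) (snd w)) \<partial>\<mu>)
        = (\<integral>w. ln (F i (fst w) (snd w) / m i (fst w)) \<partial>\<mu>) \<longleftrightarrow> (\<integral>w. ln (h w / f w) \<partial>\<mu>) = 0"
      using ln_ratio(2) by linarith
    then show ?thesis
      using gibbs(2) by (simp add: f_def h_def)
  qed
qed

section \<open>Marginal densities of the selected features\<close>

lemma sigma_finite_PiM_lborel: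
  assumes "finite I"
  shows "sigma_finite_measure (PiM I (\<lambda>_. lborel :: real measure))"
proof -
  interpret product_sigma_finite "\<lambda>_. lborel :: real measure"
    by standard
  show ?thesis
    using assms by (rule sigma_finite)
qed

locale joint_density = nu: sigma_finite_measure \<nu>
  for p :: nat and \<nu> :: "'y measure" and f :: "(nat \<Rightarrow> real) \<Rightarrow> 'y \<Rightarrow> real" +
  assumes density_nonneg: "\<And>x y. 0 \<le> f x y"
    and measurable_density[measurable]: "(\<lambda>w. f (fst w) (snd w)) \<in> borel_measurable (Xmeas p \<Otimes>\<^sub>M \<nu>)"
    and density_total: "(\<integral>\<^sup>+w. ennreal (f (fst w) (snd w)) \<partial>(Xmeas p \<Otimes>\<^sub>M \<nu>)) = 1"
begin

lemma joint_z_nonneg: "0 \<le> joint_z p f z xz y"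
  unfolding joint_z_def by (rule integral_nonneg_AE) (simp add: density_nonneg)

lemma marg_z_nonneg: "0 \<le> marg_z p \<nu> f z xz"
  unfolding marg_z_def by (rule integral_nonneg_AE) (simp add: joint_z_nonneg)

context
  fixes z :: "nat set" assumes z: "z \<subseteq> {..<p}"
begin

private abbreviation "R \<equiv> {..<p} - z"
private abbreviation "Lz \<equiv> PiM z (\<lambda>_. lborel :: real measure)"
private abbreviation "LR \<equiv> PiM R (\<lambda>_. lborel :: real measure)"

lemma measurable_merge_density[measurable]:
  "(\<lambda>(w, x'). f (merge z R (fst w, x')) (snd w))
    \<in> borel_measurable ((Lz \<Otimes>\<^sub>M \<nu>) \<Otimes>\<^sub>M LR)"
proof -
  have "z \<union> R = {..<p}"
    using z by blast
  then have "Xmeas p = PiM (z \<union> R) (\<lambda>_. lborel)"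
    by (simp only: Xmeas_def)
  then have "(\<lambda>(w, x'). (merge z R (fst w, x'), snd w))
      \<in> measurable ((Lz \<Otimes>\<^sub>M \<nu>) \<Otimes>\<^sub>M LR) (Xmeas p \<Otimes>\<^sub>M \<nu>)"
    by (simp only:) measurable
  from measurable_comp[OF this measurable_density] show ?thesis
    by (simp add: comp_def case_prod_beta)
qed

lemma measurable_joint_z[measurable]:
  "(\<lambda>w. joint_z p f z (fst w) (snd w)) \<in> borel_measurable (XZYmeas z \<nu>)"
  unfolding joint_z_def XZYmeas_def
  using sigma_finite_measure.borel_measurable_lebesgue_integral[OF sigma_finite_PiM_lborel
      measurable_merge_density] z
  by (simp add: finite_subset)

lemma measurable_marg_z[measurable]: "marg_z p \<nu> f z \<in> borel_measurable Lz"
  using nu.borel_measurable_lebesgue_integral[of "\<lambda>xz y. joint_z p f z xz y"] measurable_joint_z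
  unfolding marg_z_def[abs_def] XZYmeas_def by (simp add: case_prod_beta')

lemma nn_integral_merge_density:
  "(\<integral>\<^sup>+w. \<integral>\<^sup>+x'. ennreal (f (merge z R (fst w, x')) (snd w)) \<partial>LR \<partial>(Lz \<Otimes>\<^sub>M \<nu>)) = 1"
proof -
  interpret lebesgue: product_sigma_finite "\<lambda>_. lborel :: real measure"
    by standard
  have finite: "finite z" "finite R"
    using z by (auto intro: finite_subset)
  interpret pair_sigma_finite LR \<nu>
    using sigma_finite_PiM_lborel[OF finite(2)]
    by (simp add: pair_sigma_finite_def nu.sigma_finite_measure_axioms)
  have "z \<union> R = {..<p}"
    using z by blast
  then have Xmeas_eq: "Xmeas p = PiM (z \<union> R) (\<lambda>_. lborel)"
    by (simp only: Xmeas_def)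
  have "1 = (\<integral>\<^sup>+x. \<integral>\<^sup>+y. ennreal (f x y) \<partial>\<nu> \<partial>Xmeas p)"
    using nu.nn_integral_fst[of "\<lambda>w. ennreal (f (fst w) (snd w))" "Xmeas p"] density_total by simp
  also have "\<dots> = (\<integral>\<^sup>+xz. \<integral>\<^sup>+x'. \<integral>\<^sup>+y. ennreal (f (merge z R (xz, x')) y) \<partial>\<nu> \<partial>LR \<partial>Lz)"
    unfolding Xmeas_eq
    by (rule lebesgue.product_nn_integral_fold)
      (use finite measurable_density[unfolded Xmeas_eq] in measurable)
  also have "\<dots> = (\<integral>\<^sup>+xz. \<integral>\<^sup>+y. \<integral>\<^sup>+x'. ennreal (f (merge z R (xz, x')) y) \<partial>LR \<partial>\<nu> \<partial>Lz)"
  proof (rule nn_integral_cong)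
    fix xz assume "xz \<in> space Lz"
    then have "(\<lambda>(x', y). ((xz, y), x'))
        \<in> measurable (LR \<Otimes>\<^sub>M \<nu>) ((Lz \<Otimes>\<^sub>M \<nu>) \<Otimes>\<^sub>M LR)"
      by measurable
    from measurable_comp[OF this measurable_merge_density]
    have "(\<lambda>(x', y). ennreal (f (merge z R (xz, x')) y)) \<in> borel_measurable (LR \<Otimes>\<^sub>M \<nu>)"
      by (simp add: comp_def case_prod_beta)
    then show "(\<integral>\<^sup>+x'. \<integral>\<^sup>+y. ennreal (f (merge z R (xz, x')) y) \<partial>\<nu> \<partial>LR)
        = (\<integral>\<^sup>+y. \<integral>\<^sup>+x'. ennreal (f (merge z R (xz, x')) y) \<partial>LR \<partial>\<nu>)"
      by (rule Fubini'[symmetric])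
  qed
  also have "\<dots> = (\<integral>\<^sup>+w. \<integral>\<^sup>+x'. ennreal (f (merge z R (fst w, x')) (snd w)) \<partial>LR \<partial>(Lz \<Otimes>\<^sub>M \<nu>))"
    by (subst nu.nn_integral_fst[symmetric]) (simp_all add: split_beta')
  finally show ?thesis ..
qed

lemma measurable_nn_integral_merge_density[measurable]:
  "(\<lambda>w. \<integral>\<^sup>+x'. ennreal (f (merge z R (fst w, x')) (snd w)) \<partial>LR)
    \<in> borel_measurable (Lz \<Otimes>\<^sub>M \<nu>)"
  using sigma_finite_measure.borel_measurable_nn_integral_fst[OF sigma_finite_PiM_lborel,
      of R "\<lambda>(w, x'). ennreal (f (merge z R (fst w, x')) (snd w))"]
  by simp

lemma AE_joint_z_eq_nn_integral:
  "AE w in Lz \<Otimes>\<^sub>M \<nu>. ennreal (joint_z p f z (fst w) (snd w))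
    = (\<integral>\<^sup>+x'. ennreal (f (merge z R (fst w, x')) (snd w)) \<partial>LR)"
proof -
  have "AE w in Lz \<Otimes>\<^sub>M \<nu>.
      (\<integral>\<^sup>+x'. ennreal (f (merge z R (fst w, x')) (snd w)) \<partial>LR) \<noteq> \<infinity>"
    by (rule nn_integral_PInf_AE) (measurable, simp add: nn_integral_merge_density)
  then show ?thesis
    using AE_space
  proof eventually_elim
    case (elim w)
    from measurable_compose_Pair1[OF elim(2) measurable_merge_density]
    have "(\<lambda>x'. f (merge z R (fst w, x')) (snd w)) \<in> borel_measurable LR"
      by simp
    then have "integrable LR (\<lambda>x'. f (merge z R (fst w, x')) (snd w))"
      using elim(1) density_nonneg by (intro integrableI_bounded) (simp_all add: top.not_eq_extremum)
    then show ?case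
      unfolding joint_z_def by (subst nn_integral_eq_integral) (simp_all add: density_nonneg)
  qed
qed

lemma nn_integral_joint_z: "(\<integral>\<^sup>+w. ennreal (joint_z p f z (fst w) (snd w)) \<partial>XZYmeas z \<nu>) = 1"
  unfolding XZYmeas_def
  using nn_integral_merge_density AE_joint_z_eq_nn_integral by (simp cong: nn_integral_cong_AE)

lemma AE_marg_z_eq_nn_integral:
  "AE xz in Lz. ennreal (marg_z p \<nu> f z xz) = (\<integral>\<^sup>+y. ennreal (joint_z p f z xz y) \<partial>\<nu>)"
proof -
  define J where "J w = (\<integral>\<^sup>+x'. ennreal (f (merge z R (fst w, x')) (snd w)) \<partial>LR)" for w
  have [measurable]: "J \<in> borel_measurable (Lz \<Otimes>\<^sub>M \<nu>)"
    unfolding J_def by measurable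
  interpret pair_sigma_finite Lz \<nu>
    using sigma_finite_PiM_lborel[OF finite_subset[OF z finite_lessThan]]
    by (simp add: pair_sigma_finite_def nu.sigma_finite_measure_axioms)
  have "AE xz in Lz. AE y in \<nu>. ennreal (joint_z p f z xz y) = J (xz, y)"
    using AE_pair[OF AE_joint_z_eq_nn_integral] by (simp add: J_def)
  moreover have "AE xz in Lz. (\<integral>\<^sup>+y. J (xz, y) \<partial>\<nu>) \<noteq> \<infinity>"
  proof (rule nn_integral_PInf_AE)
    have "(\<integral>\<^sup>+w. J w \<partial>(Lz \<Otimes>\<^sub>M \<nu>)) = 1"
      using nn_integral_merge_density by (simp add: J_def)
    then show "(\<integral>\<^sup>+xz. \<integral>\<^sup>+y. J (xz, y) \<partial>\<nu> \<partial>Lz) \<noteq> \<infinity>"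
      by (simp add: nu.nn_integral_fst)
  qed measurable
  ultimately show ?thesis
    using AE_space
  proof eventually_elim
    case (elim xz)
    have "(\<lambda>y. joint_z p f z xz y) \<in> borel_measurable \<nu>"
      using measurable_compose_Pair1[OF elim(3) measurable_joint_z[unfolded XZYmeas_def]] by simp
    moreover have "(\<integral>\<^sup>+y. ennreal (joint_z p f z xz y) \<partial>\<nu>) = (\<integral>\<^sup>+y. J (xz, y) \<partial>\<nu>)"
      using elim(1) by (rule nn_integral_cong_AE)
    ultimately have "integrable \<nu> (\<lambda>y. joint_z p f z xz y)"
      using elim(2) joint_z_nonneg by (intro integrableI_bounded) (simp_all add: top.not_eq_extremum)
    then show ?case
      unfolding marg_z_def by (subst nn_integral_eq_integral) (simp_all add: joint_z_nonneg)
  qed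
qed

end

end

section \<open>Invariance and the expected log-likelihood gap\<close>

lemma (in prob_space) distributed_nn_integral_eq_1:
  assumes "distributed M N X f"
  shows "(\<integral>\<^sup>+x. f x \<partial>N) = 1"
  using distributed_nn_integral[OF assms, of "\<lambda>_. 1"] by (simp add: emeasure_space_1)

lemma pooled_z_eq_pooled_density:
  "pooled_z p \<nu> E pd z = pooled_density {..<E} (\<lambda>e. joint_z p (pd e) z) (\<lambda>e. marg_z p \<nu> (pd e) z)"
  by (simp add: fun_eq_iff pooled_z_def pooled_density_def)

locale environments =
  fixes p :: nat and \<nu> :: "'y measure" and E :: nat and pd :: "nat \<Rightarrow> (nat \<Rightarrow> real) \<Rightarrow> 'y \<Rightarrow> real"
  assumes joint_density: "\<And>e. e < E \<Longrightarrow> joint_density p \<nu> (pd e)"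
begin

abbreviation factorises_via_pooled :: "nat set \<Rightarrow> nat \<Rightarrow> bool" where
  "factorises_via_pooled z e \<equiv> AE w in XZYmeas z \<nu>.
     joint_z p (pd e) z (fst w) (snd w) = marg_z p \<nu> (pd e) z (fst w) * pooled_z p \<nu> E pd z (fst w) (snd w)"

lemma invariant_z_iff_factorises_via_pooled:
  "invariant_z p \<nu> E pd z \<longleftrightarrow> (\<forall>e<E. factorises_via_pooled z e)"
proof
  assume "invariant_z p \<nu> E pd z"
  then obtain q where "\<And>e. e < E \<Longrightarrow> AE w in XZYmeas z \<nu>.
      joint_z p (pd e) z (fst w) (snd w) = marg_z p \<nu> (pd e) z (fst w) * q (fst w) (snd w)"
    unfolding invariant_z_def by blast
  then have q: "AE w in XZYmeas z \<nu>. \<forall>e<E.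
      joint_z p (pd e) z (fst w) (snd w) = marg_z p \<nu> (pd e) z (fst w) * q (fst w) (snd w)"
    by (simp add: AE_all_countable)
  show "\<forall>e<E. factorises_via_pooled z e"
  proof (intro allI impI)
    fix e assume "e < E"
    from q show "factorises_via_pooled z e"
    proof eventually_elim
      case (elim w)
      show ?case
      proof (cases "(\<Sum>e<E. marg_z p \<nu> (pd e) z (fst w)) = 0")
        case True
        then have "marg_z p \<nu> (pd e) z (fst w) = 0"
          using \<open>e < E\<close> joint_density.marg_z_nonneg[OF joint_density]
          by (subst (asm) sum_nonneg_eq_0_iff) auto
        then show ?thesis
          using elim \<open>e < E\<close> by simp
      next
        case False
        \<comment> \<open>summing the factorisations over all environments identifies q with the pooled conditional\<close>
        have "(\<Sum>e<E. joint_z p (pd e) z (fst w) (snd w))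
            = (\<Sum>e<E. marg_z p \<nu> (pd e) z (fst w)) * q (fst w) (snd w)"
          using elim by (simp add: sum_distrib_right)
        then show ?thesis
          using elim \<open>e < E\<close> False by (simp add: pooled_z_def)
      qed
    qed
  qed
next
  assume "\<forall>e<E. factorises_via_pooled z e"
  then show "invariant_z p \<nu> E pd z"
    unfolding invariant_z_def by blast
qed

lemma log_pooled_le_log_cond:
  assumes z: "z \<subseteq> {..<p}" and e: "e < E"
    and cond_integrable:
      "integrable (distr_z p \<nu> (pd e) z) (\<lambda>w. ln (cond_z p \<nu> (pd e) z (fst w) (snd w)))"
    and pooled_integrable:
      "integrable (distr_z p \<nu> (pd e) z) (\<lambda>w. ln (pooled_z p \<nu> E pd z (fst w) (snd w)))"
  shows "(\<integral>w. ln (pooled_z p \<nu> E pd z (fst w) (snd w)) \<partial>distr_z p \<nu> (pd e) z)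
      \<le> (\<integral>w. ln (cond_z p \<nu> (pd e) z (fst w) (snd w)) \<partial>distr_z p \<nu> (pd e) z)"
    and "(\<integral>w. ln (pooled_z p \<nu> E pd z (fst w) (snd w)) \<partial>distr_z p \<nu> (pd e) z)
      = (\<integral>w. ln (cond_z p \<nu> (pd e) z (fst w) (snd w)) \<partial>distr_z p \<nu> (pd e) z)
      \<longleftrightarrow> factorises_via_pooled z e"
proof -
  interpret joint_density p \<nu> "pd e"
    using e by (rule joint_density)
  have A: "sigma_finite_measure (PiM z (\<lambda>_. lborel :: real measure))"
    using z by (intro sigma_finite_PiM_lborel) (rule finite_subset, auto)
  have F: "(\<lambda>w. joint_z p (pd e') z (fst w) (snd w)) \<in> borel_measurable (PiM z (\<lambda>_. lborel) \<Otimes>\<^sub>M \<nu>)"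
    and m: "marg_z p \<nu> (pd e') z \<in> borel_measurable (PiM z (\<lambda>_. lborel))"
    and F_nonneg: "0 \<le> joint_z p (pd e') z x y"
    and m_nonneg: "0 \<le> marg_z p \<nu> (pd e') z x"
    and marginal: "AE x in PiM z (\<lambda>_. lborel). ennreal (marg_z p \<nu> (pd e') z x)
      = (\<integral>\<^sup>+y. ennreal (joint_z p (pd e') z x y) \<partial>\<nu>)"
    if "e' \<in> {..<E}" for e' x y
    using joint_density.measurable_joint_z[OF joint_density z]
      joint_density.measurable_marg_z[OF joint_density z]
      joint_density.joint_z_nonneg[OF joint_density] joint_density.marg_z_nonneg[OF joint_density]
      joint_density.AE_marg_z_eq_nn_integral[OF joint_density z] that
    by (simp_all add: XZYmeas_def)
  have total: "(\<integral>\<^sup>+w. ennreal (joint_z p (pd e) z (fst w) (snd w)) \<partial>(PiM z (\<lambda>_. lborel) \<Otimes>\<^sub>M \<nu>)) = 1"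
    using nn_integral_joint_z[OF z] by (simp add: XZYmeas_def)
  note gap = pooled_log_likelihood_le[where A="PiM z (\<lambda>_. lborel)" and B=\<nu> and I="{..<E}" and i=e
      and F="\<lambda>e. joint_z p (pd e) z" and m="\<lambda>e. marg_z p \<nu> (pd e) z",
      OF A nu.sigma_finite_measure_axioms finite_lessThan _ F m F_nonneg m_nonneg marginal total,
      unfolded pooled_z_eq_pooled_density[symmetric], folded distr_z_def[unfolded XZYmeas_def]]
  show "(\<integral>w. ln (pooled_z p \<nu> E pd z (fst w) (snd w)) \<partial>distr_z p \<nu> (pd e) z)
      \<le> (\<integral>w. ln (cond_z p \<nu> (pd e) z (fst w) (snd w)) \<partial>distr_z p \<nu> (pd e) z)"
    and "(\<integral>w. ln (pooled_z p \<nu> E pd z (fst w) (snd w)) \<partial>distr_z p \<nu> (pd e) z)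
      = (\<integral>w. ln (cond_z p \<nu> (pd e) z (fst w) (snd w)) \<partial>distr_z p \<nu> (pd e) z)
      \<longleftrightarrow> factorises_via_pooled z e"
    unfolding XZYmeas_def using gap cond_integrable pooled_integrable e by (simp_all add: cond_z_def)
qed

lemma exp_log_pooled_le_exp_log_cond:
  assumes z: "z \<subseteq> {..<p}"
    and cond_integrable: "\<And>e. e < E \<Longrightarrow>
      integrable (distr_z p \<nu> (pd e) z) (\<lambda>w. ln (cond_z p \<nu> (pd e) z (fst w) (snd w)))"
    and pooled_integrable: "\<And>e. e < E \<Longrightarrow>
      integrable (distr_z p \<nu> (pd e) z) (\<lambda>w. ln (pooled_z p \<nu> E pd z (fst w) (snd w)))"
  shows "exp_log_pooled p \<nu> E pd z \<le> exp_log_cond p \<nu> E pd z"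
    and "exp_log_pooled p \<nu> E pd z = exp_log_cond p \<nu> E pd z \<longleftrightarrow> invariant_z p \<nu> E pd z"
proof -
  define T where "T e = (\<integral>w. ln (pooled_z p \<nu> E pd z (fst w) (snd w)) \<partial>distr_z p \<nu> (pd e) z)
      - (\<integral>w. ln (cond_z p \<nu> (pd e) z (fst w) (snd w)) \<partial>distr_z p \<nu> (pd e) z)" for e
  have T_nonpos: "T e \<le> 0"
    and T_eq_0_iff: "T e = 0 \<longleftrightarrow> factorises_via_pooled z e"
    if "e < E" for e
    using log_pooled_le_log_cond[OF z that cond_integrable[OF that] pooled_integrable[OF that]]
    by (simp_all add: T_def)
  have diff: "exp_log_pooled p \<nu> E pd z - exp_log_cond p \<nu> E pd z = (\<Sum>e<E. T e) / real E"
    by (simp add: exp_log_pooled_def exp_log_cond_def T_def sum_subtractf diff_divide_distrib)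
  show "exp_log_pooled p \<nu> E pd z \<le> exp_log_cond p \<nu> E pd z"
  proof -
    have "(\<Sum>e<E. T e) \<le> 0"
      using T_nonpos by (intro sum_nonpos) simp
    then have "(\<Sum>e<E. T e) / real E \<le> 0"
      by (simp add: divide_nonpos_nonneg)
    then show ?thesis
      using diff by simp
  qed
  have "exp_log_pooled p \<nu> E pd z = exp_log_cond p \<nu> E pd z \<longleftrightarrow> (\<forall>e<E. T e = 0)"
  proof (cases "E = 0")
    case False
    have "exp_log_pooled p \<nu> E pd z = exp_log_cond p \<nu> E pd z \<longleftrightarrow> (\<Sum>e<E. T e) / real E = 0"
      by (simp add: diff[symmetric])
    also have "\<dots> \<longleftrightarrow> (\<Sum>e<E. - T e) = 0"
      using False by (simp add: sum_negf)
    also have "\<dots> \<longleftrightarrow> (\<forall>e<E. T e = 0)"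
      using T_nonpos by (subst sum_nonneg_eq_0_iff) auto
    finally show ?thesis .
  qed (simp add: exp_log_pooled_def exp_log_cond_def)
  also have "\<dots> \<longleftrightarrow> (\<forall>e<E. factorises_via_pooled z e)"
    using T_eq_0_iff by simp
  also have "\<dots> \<longleftrightarrow> invariant_z p \<nu> E pd z"
    by (rule invariant_z_iff_factorises_via_pooled[symmetric])
  finally show "exp_log_pooled p \<nu> E pd z = exp_log_cond p \<nu> E pd z \<longleftrightarrow> invariant_z p \<nu> E pd z" .
qed

end

section \<open>Concentration of the BIP posterior\<close>

definition mean_elog :: "nat \<Rightarrow> nat \<Rightarrow> (nat \<Rightarrow> nat \<Rightarrow> real) \<Rightarrow> ereal" where
  "mean_elog E n x = ereal (1 / (real n * real E)) * (\<Sum>i<n. \<Sum>e<E. elog (x e i))"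

lemma measurable_elog[measurable]: "elog \<in> borel_measurable borel"
  unfolding elog_def[abs_def] by measurable

lemma borel_measurable_mean_elog:
  assumes "\<And>e i. e < E \<Longrightarrow> (\<lambda>\<omega>. x \<omega> e i) \<in> borel_measurable M"
  shows "(\<lambda>\<omega>. mean_elog E n (x \<omega>)) \<in> borel_measurable M"
  unfolding mean_elog_def using assms
  by (intro borel_measurable_ereal_times borel_measurable_const borel_measurable_ereal_sum)
    (auto intro: measurable_compose[OF _ measurable_elog])

lemma sum_ereal_eq_MInfty:
  fixes f :: "'i \<Rightarrow> ereal"
  assumes "finite A" "i \<in> A" "f i = -\<infinity>" "\<And>j. j \<in> A \<Longrightarrow> f j \<noteq> \<infinity>"
  shows "sum f A = -\<infinity>"
proof -
  have "sum f A = f i + sum f (A - {i})"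
    using assms(1,2) by (rule sum.remove)
  moreover have "sum f (A - {i}) \<noteq> \<infinity>"
    using assms by (auto simp: sum_Pinfty)
  ultimately show ?thesis
    using assms(3) by simp
qed

lemma mean_elog_close:
  fixes x :: "nat \<Rightarrow> nat \<Rightarrow> real"
  assumes n: "n \<ge> 1" and E: "E \<ge> 1" and close: "\<bar>mean_elog E n x - ereal c\<bar> \<le> ereal \<epsilon>"
  shows "\<forall>e<E. \<forall>i<n. 0 < x e i"
    and "\<bar>(\<Sum>i<n. \<Sum>e<E. ln (x e i)) / (real n * real E) - c\<bar> \<le> \<epsilon>"
proof -
  show "\<forall>e<E. \<forall>i<n. 0 < x e i"
  proof (rule ccontr)
    assume "\<not> (\<forall>e<E. \<forall>i<n. 0 < x e i)"
    then obtain e i where ei: "e < E" "i < n" "x e i \<le> 0"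
      by (auto simp: not_less)
    have "(\<Sum>e<E. elog (x e i)) = -\<infinity>"
      using ei by (intro sum_ereal_eq_MInfty[of "{..<E}" e]) (auto simp: elog_def)
    then have "(\<Sum>i<n. \<Sum>e<E. elog (x e i)) = -\<infinity>"
      using ei by (intro sum_ereal_eq_MInfty[of "{..<n}" i "\<lambda>i. \<Sum>e<E. elog (x e i)"])
        (auto simp: sum_Pinfty elog_def)
    moreover have "0 < 1 / (real n * real E)"
      using n E by simp
    ultimately have "mean_elog E n x = -\<infinity>"
      using n E by (simp add: mean_elog_def)
    with close show False
      by simp
  qed
  then have "(\<Sum>i<n. \<Sum>e<E. elog (x e i)) = ereal (\<Sum>i<n. \<Sum>e<E. ln (x e i))"
    by (simp add: elog_def)
  with close show "\<bar>(\<Sum>i<n. \<Sum>e<E. ln (x e i)) / (real n * real E) - c\<bar> \<le> \<epsilon>"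
    by (simp add: mean_elog_def)
qed

lemma prod_ratio_eq_exp:
  fixes a b :: "nat \<Rightarrow> nat \<Rightarrow> real"
  assumes "\<forall>e<E. \<forall>i<n. 0 < a e i" "\<forall>e<E. \<forall>i<n. 0 < b e i"
  shows "(\<Prod>e<E. \<Prod>i<n. a e i / b e i) = exp ((\<Sum>i<n. \<Sum>e<E. ln (a e i)) - (\<Sum>i<n. \<Sum>e<E. ln (b e i)))"
proof -
  have "(\<Prod>e<E. \<Prod>i<n. a e i / b e i) = (\<Prod>e<E. \<Prod>i<n. exp (ln (a e i) - ln (b e i)))"
    using assms by (intro prod.cong refl) (simp add: exp_diff)
  also have "\<dots> = exp (\<Sum>e<E. \<Sum>i<n. ln (a e i) - ln (b e i))"
    by (simp add: exp_sum)
  also have "(\<Sum>e<E. \<Sum>i<n. ln (a e i) - ln (b e i))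
      = (\<Sum>i<n. \<Sum>e<E. ln (a e i)) - (\<Sum>i<n. \<Sum>e<E. ln (b e i))"
    by (simp add: sum_subtractf sum.swap[of _ "{..<E}"])
  finally show ?thesis .
qed

lemma likelihood_ratio_exp_form:
  fixes a b :: "nat \<Rightarrow> nat \<Rightarrow> real"
  assumes n: "n \<ge> 1" and E: "E \<ge> 1"
    and close_a: "\<bar>mean_elog E n a - ereal ca\<bar> \<le> ereal (\<delta>/8)"
    and close_b: "\<bar>mean_elog E n b - ereal cb\<bar> \<le> ereal (\<delta>/8)"
  obtains U where "(\<Prod>e<E. \<Prod>i<n. a e i / b e i) = exp (real n * real E * U)"
    and "\<bar>U - (ca - cb)\<bar> \<le> \<delta>/4"
proof
  define U where "U = ((\<Sum>i<n. \<Sum>e<E. ln (a e i)) - (\<Sum>i<n. \<Sum>e<E. ln (b e i))) / (real n * real E)"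
  have "0 < real n * real E"
    using n E by simp
  then show "(\<Prod>e<E. \<Prod>i<n. a e i / b e i) = exp (real n * real E * U)"
    using prod_ratio_eq_exp mean_elog_close(1)[OF n E close_a] mean_elog_close(1)[OF n E close_b]
    by (simp add: U_def)
  show "\<bar>U - (ca - cb)\<bar> \<le> \<delta>/4"
    using mean_elog_close(2)[OF n E close_a] mean_elog_close(2)[OF n E close_b]
    unfolding U_def diff_divide_distrib abs_le_iff by linarith
qed

lemma likelihood_ratio_le:
  fixes a b a' b' :: "nat \<Rightarrow> nat \<Rightarrow> real"
  assumes n: "n \<ge> 1" and E: "E \<ge> 1" and \<delta>: "0 \<le> \<delta>"
    and "\<bar>mean_elog E n a - ereal ca\<bar> \<le> ereal (\<delta>/8)" "\<bar>mean_elog E n b - ereal cb\<bar> \<le> ereal (\<delta>/8)"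
    and "\<bar>mean_elog E n a' - ereal ca'\<bar> \<le> ereal (\<delta>/8)" "\<bar>mean_elog E n b' - ereal cb'\<bar> \<le> ereal (\<delta>/8)"
    and gap: "ca - cb \<le> ca' - cb' - \<delta>"
  shows "(\<Prod>e<E. \<Prod>i<n. a e i / b e i) \<le> exp (- real n * \<delta> / 2) * (\<Prod>e<E. \<Prod>i<n. a' e i / b' e i)"
proof -
  obtain U where U: "(\<Prod>e<E. \<Prod>i<n. a e i / b e i) = exp (real n * real E * U)" "\<bar>U - (ca - cb)\<bar> \<le> \<delta>/4"
    using likelihood_ratio_exp_form[OF n E assms(4,5)] by blast
  obtain U' where U': "(\<Prod>e<E. \<Prod>i<n. a' e i / b' e i) = exp (real n * real E * U')"
    "\<bar>U' - (ca' - cb')\<bar> \<le> \<delta>/4"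
    using likelihood_ratio_exp_form[OF n E assms(6,7)] by blast
  have "U \<le> U' - \<delta>/2"
    using U(2) U'(2) gap unfolding abs_le_iff by linarith
  then have "real n * real E * U \<le> real n * real E * (U' - \<delta>/2)"
    by (simp add: mult_left_mono)
  also have "\<dots> \<le> - real n * \<delta> / 2 + real n * real E * U'"
    using E \<delta> mult_left_mono[of 1 "real E" "real n * \<delta>"] by (simp add: algebra_simps)
  finally have "exp (real n * real E * U) \<le> exp (- real n * \<delta> / 2 + real n * real E * U')"
    by simp
  then show ?thesis
    unfolding U(1) U'(1) exp_add .
qed

lemma normalised_weight_bound:
  fixes W c :: "'a \<Rightarrow> real"
  assumes fin: "finite Zs" and zs: "zs \<in> Zs" and W_pos: "0 < W zs" and W_nonneg: "\<And>z. z \<in> Zs \<Longrightarrow> 0 \<le> W z"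
    and W_le: "\<And>z. z \<in> Zs - {zs} \<Longrightarrow> W z \<le> c z * W zs" and c_nonneg: "\<And>z. z \<in> Zs \<Longrightarrow> 0 \<le> c z"
    and K: "(\<Sum>z\<in>Zs - {zs}. c z) \<le> K"
  shows "\<bar>W zs / (\<Sum>z\<in>Zs. W z) - 1\<bar> \<le> K"
    and "K < 1 \<Longrightarrow> z \<in> Zs - {zs} \<Longrightarrow> W z / (\<Sum>z\<in>Zs. W z) < W zs / (\<Sum>z\<in>Zs. W z)"
proof -
  define S where "S = (\<Sum>z\<in>Zs. W z)"
  define rest where "rest = (\<Sum>z\<in>Zs - {zs}. W z)"
  have S: "S = W zs + rest"
    unfolding S_def rest_def using fin zs by (rule sum.remove)
  have rest_nonneg: "0 \<le> rest"
    unfolding rest_def using W_nonneg by (intro sum_nonneg) simp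
  have "rest \<le> (\<Sum>z\<in>Zs - {zs}. c z * W zs)"
    unfolding rest_def using W_le by (rule sum_mono)
  also have "\<dots> \<le> K * W zs"
    using K W_pos by (simp add: sum_distrib_right[symmetric])
  finally have rest_le: "rest \<le> K * W zs" .
  have "\<bar>W zs / S - 1\<bar> = rest / S"
    using S W_pos rest_nonneg by (simp add: field_simps)
  also have "\<dots> \<le> rest / W zs"
    using S W_pos rest_nonneg by (intro divide_left_mono) auto
  also have "\<dots> \<le> K"
    using rest_le W_pos by (simp add: divide_le_eq)
  finally show "\<bar>W zs / (\<Sum>z\<in>Zs. W z) - 1\<bar> \<le> K"
    by (simp add: S_def)
  assume "K < 1" and z: "z \<in> Zs - {zs}"
  have "c z \<le> K"
    using K member_le_sum[of z "Zs - {zs}" c] z c_nonneg fin by force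
  have "W z \<le> c z * W zs"
    using z by (rule W_le)
  also have "\<dots> \<le> K * W zs"
    using \<open>c z \<le> K\<close> W_pos by (simp add: mult_right_mono)
  also have "\<dots> < W zs"
    using \<open>K < 1\<close> W_pos by simp
  finally show "W z / (\<Sum>z\<in>Zs. W z) < W zs / (\<Sum>z\<in>Zs. W z)"
    using S W_pos rest_nonneg by (simp add: S_def divide_strict_right_mono)
qed

lemma arg_max_eqI:
  fixes f :: "'a \<Rightarrow> 'b :: order"
  assumes "P x" and "\<And>y. P y \<Longrightarrow> y \<noteq> x \<Longrightarrow> f y < f x"
  shows "arg_max f P = x"
proof -
  have "is_arg_max f P x"
    using assms unfolding is_arg_max_def by force
  then have "is_arg_max f P (arg_max f P)"
    unfolding arg_max_def by (rule someI)
  then show ?thesis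
    using assms unfolding is_arg_max_def by force
qed

lemma bip_post_bound:
  fixes Zs :: "nat set set" and prior :: "nat set \<Rightarrow> real" and cg cp :: "nat set \<Rightarrow> real"
  assumes n: "n \<ge> 1" and E: "E \<ge> 1" and fin: "finite Zs" and zs: "zs \<in> Zs"
    and prior_pos: "0 < prior zs" and prior_nonneg: "\<And>z. z \<in> Zs \<Longrightarrow> 0 \<le> prior z" and \<delta>: "0 \<le> \<delta>"
    and gap: "\<And>z. z \<in> Zs \<Longrightarrow> 0 < prior z \<Longrightarrow> z \<noteq> zs \<Longrightarrow> cg z - cp z \<le> cg zs - cp zs - \<delta>"
    and close_g: "\<And>z. z \<in> Zs \<Longrightarrow> 0 < prior z \<Longrightarrow>
      \<bar>mean_elog E n (\<lambda>e i. ghat n z \<omega> (xsub z (X e i \<omega>)) (Y e i \<omega>)) - ereal (cg z)\<bar> \<le> ereal (\<delta>/8)"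
    and close_p: "\<And>z. z \<in> Zs \<Longrightarrow> 0 < prior z \<Longrightarrow>
      \<bar>mean_elog E n (\<lambda>e i. phat n e z \<omega> (xsub z (X e i \<omega>)) (Y e i \<omega>)) - ereal (cp z)\<bar> \<le> ereal (\<delta>/8)"
  defines "K \<equiv> (\<Sum>z\<in>Zs. prior z) / prior zs * exp (- real n * \<delta> / 2)"
  shows "\<bar>bip_post Zs E prior phat ghat X Y n \<omega> zs - 1\<bar> \<le> K"
    and "K < 1 \<Longrightarrow> arg_max (bip_post Zs E prior phat ghat X Y n \<omega>) (\<lambda>z. z \<in> Zs) = zs"
proof -
  define W where "W = bip_weight E prior phat ghat X Y n \<omega>"
  define Lik where "Lik z = (\<Prod>e<E. \<Prod>i<n. ghat n z \<omega> (xsub z (X e i \<omega>)) (Y e i \<omega>)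
      / phat n e z \<omega> (xsub z (X e i \<omega>)) (Y e i \<omega>))" for z
  define c where "c z = prior z / prior zs * exp (- real n * \<delta> / 2)" for z
  have W_eq: "W z = prior z * Lik z" for z
    by (simp add: W_def Lik_def bip_weight_def)
  have Lik_pos: "0 < Lik z" if "z \<in> Zs" "0 < prior z" for z
    using likelihood_ratio_exp_form[OF n E close_g[OF that] close_p[OF that]] by (metis Lik_def exp_gt_zero)
  have W_nonneg: "0 \<le> W z" if "z \<in> Zs" for z
    using Lik_pos[OF that] prior_nonneg[OF that] by (cases "prior z = 0") (auto simp: W_eq)
  have W_le: "W z \<le> c z * W zs" if "z \<in> Zs - {zs}" for z
  proof (cases "prior z = 0")
    case False
    then have "0 < prior z"
      using prior_nonneg that by (simp add: order_less_le)
    then have "Lik z \<le> exp (- real n * \<delta> / 2) * Lik zs"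
      unfolding Lik_def using that zs prior_pos
      by (intro likelihood_ratio_le[OF n E \<delta> close_g close_p close_g close_p] gap) auto
    then show ?thesis
      using \<open>0 < prior z\<close> prior_pos by (simp add: W_eq c_def mult_left_mono)
  qed (simp add: W_eq c_def)
  have c_nonneg: "0 \<le> c z" if "z \<in> Zs" for z
    using prior_nonneg[OF that] prior_pos by (simp add: c_def)
  have "(\<Sum>z\<in>Zs - {zs}. c z) \<le> (\<Sum>z\<in>Zs. c z)"
    using fin c_nonneg by (intro sum_mono2) auto
  also have "\<dots> = K"
    by (simp add: K_def c_def sum_distrib_right sum_divide_distrib)
  finally have c_sum: "(\<Sum>z\<in>Zs - {zs}. c z) \<le> K" .
  have W_zs: "0 < W zs"
    using Lik_pos[OF zs prior_pos] prior_pos by (simp add: W_eq)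
  have bound: "\<bar>W zs / (\<Sum>z\<in>Zs. W z) - 1\<bar> \<le> K"
    "K < 1 \<Longrightarrow> z \<in> Zs - {zs} \<Longrightarrow> W z / (\<Sum>z\<in>Zs. W z) < W zs / (\<Sum>z\<in>Zs. W z)" for z
    using normalised_weight_bound[OF fin zs W_zs W_nonneg W_le c_nonneg c_sum] by blast+
  have post: "bip_post Zs E prior phat ghat X Y n \<omega> = (\<lambda>z. W z / (\<Sum>z\<in>Zs. W z))"
    by (simp add: fun_eq_iff bip_post_def W_def)
  show "\<bar>bip_post Zs E prior phat ghat X Y n \<omega> zs - 1\<bar> \<le> K"
    using bound(1) by (simp add: post)
  show "arg_max (bip_post Zs E prior phat ghat X Y n \<omega>) (\<lambda>z. z \<in> Zs) = zs" if "K < 1"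
    unfolding post using zs bound(2)[OF that] by (intro arg_max_eqI) auto
qed

lemma obtain_uniform_gap:
  fixes f :: "'a \<Rightarrow> real"
  assumes "finite A" "\<And>x. x \<in> A \<Longrightarrow> f x < c"
  obtains \<delta> where "0 < \<delta>" "\<And>x. x \<in> A \<Longrightarrow> f x \<le> c - \<delta>"
proof
  define \<delta> where "\<delta> = Min (insert 1 ((\<lambda>x. c - f x) ` A))"
  show "0 < \<delta>"
    unfolding \<delta>_def using assms by (subst Min_gr_iff) auto
  show "f x \<le> c - \<delta>" if "x \<in> A" for x
  proof -
    have "\<delta> \<le> c - f x"
      unfolding \<delta>_def using \<open>finite A\<close> that by (intro Min_le) auto
    then show ?thesis
      by simp
  qed
qed

lemma tendsto_measure_zero_if_subset:
  assumes "\<forall>\<^sub>F n in sequentially. A n \<subseteq> B n" "finite_measure M" "\<And>n. B n \<in> sets M"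
    and "(\<lambda>n. measure M (B n)) \<longlonglongrightarrow> 0"
  shows "(\<lambda>n. measure M (A n)) \<longlonglongrightarrow> 0"
proof (rule tendsto_sandwich[of "\<lambda>_. 0" _ _ "\<lambda>n. measure M (B n)"])
  show "\<forall>\<^sub>F n in sequentially. measure M (A n) \<le> measure M (B n)"
    using assms(1) by eventually_elim (use assms(2,3) finite_measure.finite_measure_mono in blast)
qed (use assms(4) in simp_all)

lemma concentration_off_bad_events:
  fixes K :: "nat \<Rightarrow> real" and post :: "nat \<Rightarrow> 'w \<Rightarrow> real" and P :: "nat \<Rightarrow> 'w \<Rightarrow> bool"
  assumes M: "finite_measure M" and Bad_sets: "\<And>n. Bad n \<in> sets M"
    and Bad: "(\<lambda>n. measure M (Bad n)) \<longlonglongrightarrow> 0" and K: "K \<longlonglongrightarrow> 0"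
    and good: "\<And>n \<omega>. n \<ge> 1 \<Longrightarrow> \<omega> \<in> space M - Bad n \<Longrightarrow> \<bar>post n \<omega> - 1\<bar> \<le> K n \<and> (K n < 1 \<longrightarrow> P n \<omega>)"
  shows "(\<lambda>n. measure M {\<omega> \<in> space M. \<not> P n \<omega>}) \<longlonglongrightarrow> 0"
    and "conv_in_prob M (\<lambda>n \<omega>. ereal (post n \<omega>)) 1"
proof -
  have eventually_small: "\<forall>\<^sub>F n in sequentially. n \<ge> 1 \<and> K n < \<epsilon>" if "0 < \<epsilon>" for \<epsilon>
    using eventually_ge_at_top order_tendstoD(2)[OF K that] by (rule eventually_conj)
  have "\<forall>\<^sub>F n in sequentially. {\<omega> \<in> space M. \<not> P n \<omega>} \<subseteq> Bad n"
    using eventually_small[OF zero_less_one]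
  proof eventually_elim
    case (elim n)
    show ?case
      using good[of n] elim by auto
  qed
  then show "(\<lambda>n. measure M {\<omega> \<in> space M. \<not> P n \<omega>}) \<longlonglongrightarrow> 0"
    using M Bad_sets Bad by (rule tendsto_measure_zero_if_subset)
  show "conv_in_prob M (\<lambda>n \<omega>. ereal (post n \<omega>)) 1"
    unfolding conv_in_prob_def
  proof (intro allI impI)
    fix \<epsilon> :: real assume "0 < \<epsilon>"
    have "\<forall>\<^sub>F n in sequentially. {\<omega> \<in> space M. ereal \<epsilon> < \<bar>ereal (post n \<omega>) - ereal 1\<bar>} \<subseteq> Bad n"
      using eventually_small[OF \<open>0 < \<epsilon>\<close>]
    proof eventually_elim
      case (elim n)
      show ?case
        using good[of n] elim by fastforce
    qed
    then show "(\<lambda>n. measure M {\<omega> \<in> space M. ereal \<epsilon> < \<bar>ereal (post n \<omega>) - ereal 1\<bar>}) \<longlonglongrightarrow> 0"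
      using M Bad_sets Bad by (rule tendsto_measure_zero_if_subset)
  qed
qed

lemma conv_in_prob_finite_family:
  fixes Z :: "'i \<Rightarrow> nat \<Rightarrow> 'w \<Rightarrow> ereal" and c :: "'i \<Rightarrow> real"
  assumes M: "prob_space M" and I: "finite I" and Z: "\<And>i n. i \<in> I \<Longrightarrow> Z i n \<in> borel_measurable M"
    and conv: "\<And>i. i \<in> I \<Longrightarrow> conv_in_prob M (Z i) (c i)" and \<epsilon>: "0 < \<epsilon>"
  shows "(\<lambda>n. measure M {\<omega> \<in> space M. \<exists>i\<in>I. ereal \<epsilon> < \<bar>Z i n \<omega> - ereal (c i)\<bar>}) \<longlonglongrightarrow> 0"
proof -
  interpret prob_space M by fact
  define dev where "dev i n = {\<omega> \<in> space M. ereal \<epsilon> < \<bar>Z i n \<omega> - ereal (c i)\<bar>}" for i n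
  have dev_sets: "dev i n \<in> sets M" if "i \<in> I" for i n
    unfolding dev_def using Z[OF that] by measurable
  have "{\<omega> \<in> space M. \<exists>i\<in>I. ereal \<epsilon> < \<bar>Z i n \<omega> - ereal (c i)\<bar>} = (\<Union>i\<in>I. dev i n)" for n
    by (auto simp: dev_def)
  moreover have "(\<lambda>n. measure M (\<Union>i\<in>I. dev i n)) \<longlonglongrightarrow> 0"
  proof (rule tendsto_sandwich[of "\<lambda>_. 0" _ _ "\<lambda>n. \<Sum>i\<in>I. measure M (dev i n)"])
    show "\<forall>\<^sub>F n in sequentially. measure M (\<Union>i\<in>I. dev i n) \<le> (\<Sum>i\<in>I. measure M (dev i n))"
      using I dev_sets by (intro always_eventually allI finite_measure_subadditive_finite) auto
    have "(\<lambda>n. \<Sum>i\<in>I. measure M (dev i n)) \<longlonglongrightarrow> (\<Sum>i\<in>I. 0)"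
      using conv \<epsilon> by (intro tendsto_sum) (simp add: conv_in_prob_def dev_def)
    then show "(\<lambda>n. \<Sum>i\<in>I. measure M (dev i n)) \<longlonglongrightarrow> 0"
      by simp
  qed simp_all
  ultimately show ?thesis
    by simp
qed

lemma bip_post_concentrates:
  fixes M :: "'w measure" and Zs :: "nat set set" and prior cg cp :: "nat set \<Rightarrow> real"
  assumes M: "prob_space M" and E: "E \<ge> 1" and fin: "finite Zs" and zs: "zs \<in> Zs"
    and prior_pos: "0 < prior zs" and prior_nonneg: "\<And>z. z \<in> Zs \<Longrightarrow> 0 \<le> prior z"
    and ghat_meas: "\<And>n e i z. e < E \<Longrightarrow> z \<in> Zs \<Longrightarrow>
      (\<lambda>\<omega>. ghat n z \<omega> (xsub z (X e i \<omega>)) (Y e i \<omega>)) \<in> borel_measurable M"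
    and phat_meas: "\<And>n e i z. e < E \<Longrightarrow> z \<in> Zs \<Longrightarrow>
      (\<lambda>\<omega>. phat n e z \<omega> (xsub z (X e i \<omega>)) (Y e i \<omega>)) \<in> borel_measurable M"
    and consistent_g: "\<And>z. z \<in> Zs \<Longrightarrow> 0 < prior z \<Longrightarrow>
      conv_in_prob M (\<lambda>n \<omega>. mean_elog E n (\<lambda>e i. ghat n z \<omega> (xsub z (X e i \<omega>)) (Y e i \<omega>))) (cg z)"
    and consistent_p: "\<And>z. z \<in> Zs \<Longrightarrow> 0 < prior z \<Longrightarrow>
      conv_in_prob M (\<lambda>n \<omega>. mean_elog E n (\<lambda>e i. phat n e z \<omega> (xsub z (X e i \<omega>)) (Y e i \<omega>))) (cp z)"
    and gap: "\<And>z. z \<in> Zs \<Longrightarrow> 0 < prior z \<Longrightarrow> z \<noteq> zs \<Longrightarrow> cg z - cp z < cg zs - cp zs"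
  shows "(\<lambda>n. measure M {\<omega> \<in> space M. arg_max (bip_post Zs E prior phat ghat X Y n \<omega>) (\<lambda>z. z \<in> Zs) \<noteq> zs})
      \<longlonglongrightarrow> 0"
    and "conv_in_prob M (\<lambda>n \<omega>. ereal (bip_post Zs E prior phat ghat X Y n \<omega> zs)) 1"
proof -
  interpret prob_space M by fact
  define Zp where "Zp = {z \<in> Zs. 0 < prior z}"
  have Zp: "finite Zp" "\<And>z. z \<in> Zp \<longleftrightarrow> z \<in> Zs \<and> 0 < prior z"
    using fin by (simp_all add: Zp_def)
  obtain \<delta> where \<delta>: "0 < \<delta>" and "\<And>z. z \<in> Zp - {zs} \<Longrightarrow> cg z - cp z \<le> cg zs - cp zs - \<delta>"
    using obtain_uniform_gap[of "Zp - {zs}" "\<lambda>z. cg z - cp z"] Zp gap by blast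
  then have gap_\<delta>: "\<And>z. z \<in> Zs \<Longrightarrow> 0 < prior z \<Longrightarrow> z \<noteq> zs \<Longrightarrow> cg z - cp z \<le> cg zs - cp zs - \<delta>"
    by (simp add: Zp)
  define Lg where "Lg z n \<omega> = mean_elog E n (\<lambda>e i. ghat n z \<omega> (xsub z (X e i \<omega>)) (Y e i \<omega>))" for z n \<omega>
  define Lp where "Lp z n \<omega> = mean_elog E n (\<lambda>e i. phat n e z \<omega> (xsub z (X e i \<omega>)) (Y e i \<omega>))" for z n \<omega>
  have Lg_meas: "Lg z n \<in> borel_measurable M" and Lp_meas: "Lp z n \<in> borel_measurable M" if "z \<in> Zp" for z n
    using that unfolding Lg_def Lp_def Zp
    by (auto intro!: borel_measurable_mean_elog ghat_meas phat_meas)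
  define Bad_g where "Bad_g n = {\<omega> \<in> space M. \<exists>z\<in>Zp. ereal (\<delta>/8) < \<bar>Lg z n \<omega> - ereal (cg z)\<bar>}" for n
  define Bad_p where "Bad_p n = {\<omega> \<in> space M. \<exists>z\<in>Zp. ereal (\<delta>/8) < \<bar>Lp z n \<omega> - ereal (cp z)\<bar>}" for n
  define Bad where "Bad n = Bad_g n \<union> Bad_p n" for n
  have Bad_sets: "Bad_g n \<in> sets M" "Bad_p n \<in> sets M" "Bad n \<in> sets M" for n
    unfolding Bad_def Bad_g_def Bad_p_def using Zp(1) Lg_meas Lp_meas by measurable
  have "(\<lambda>n. measure M (Bad_g n)) \<longlonglongrightarrow> 0"
    unfolding Bad_g_def
    by (rule conv_in_prob_finite_family[OF M Zp(1) Lg_meas])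
      (use \<delta> consistent_g in \<open>auto simp: Zp Lg_def[abs_def]\<close>)
  moreover have "(\<lambda>n. measure M (Bad_p n)) \<longlonglongrightarrow> 0"
    unfolding Bad_p_def
    by (rule conv_in_prob_finite_family[OF M Zp(1) Lp_meas])
      (use \<delta> consistent_p in \<open>auto simp: Zp Lp_def[abs_def]\<close>)
  ultimately have sum_tendsto: "(\<lambda>n. measure M (Bad_g n) + measure M (Bad_p n)) \<longlonglongrightarrow> 0"
    using tendsto_add by fastforce
  have Bad_tendsto: "(\<lambda>n. measure M (Bad n)) \<longlonglongrightarrow> 0"
    by (intro tendsto_sandwich[OF _ _ tendsto_const sum_tendsto] always_eventually allI)
      (simp_all add: Bad_def Bad_sets measure_Un_le)
  define K where "K n = (\<Sum>z\<in>Zs. prior z) / prior zs * exp (- real n * \<delta> / 2)" for n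
  have "(\<lambda>n. (\<Sum>z\<in>Zs. prior z) / prior zs * exp (- \<delta> / 2) ^ n) \<longlonglongrightarrow> 0"
    using \<delta> by (intro tendsto_mult_right_zero LIMSEQ_power_zero) simp
  moreover have "exp (- \<delta> / 2) ^ n = exp (- real n * \<delta> / 2)" for n
    by (simp add: exp_of_nat_mult[symmetric])
  ultimately have K_tendsto: "K \<longlonglongrightarrow> 0"
    by (simp add: K_def[abs_def])
  have "\<bar>bip_post Zs E prior phat ghat X Y n \<omega> zs - 1\<bar> \<le> K n \<and>
      (K n < 1 \<longrightarrow> arg_max (bip_post Zs E prior phat ghat X Y n \<omega>) (\<lambda>z. z \<in> Zs) = zs)"
    if "n \<ge> 1" "\<omega> \<in> space M - Bad n" for n \<omega>
  proof -
    have close_g: "\<bar>Lg z n \<omega> - ereal (cg z)\<bar> \<le> ereal (\<delta>/8)"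
      and close_p: "\<bar>Lp z n \<omega> - ereal (cp z)\<bar> \<le> ereal (\<delta>/8)"
      if "z \<in> Zs" "0 < prior z" for z
      using \<open>\<omega> \<in> space M - Bad n\<close> that by (auto simp: Bad_def Bad_g_def Bad_p_def Zp not_less)
    show ?thesis
      using bip_post_bound[where ghat=ghat and phat=phat and X=X and Y=Y and \<omega>=\<omega> and cg=cg and cp=cp
          and prior=prior and Zs=Zs and zs=zs and n=n and E=E and \<delta>=\<delta>,
          OF \<open>n \<ge> 1\<close> E fin zs prior_pos prior_nonneg less_imp_le[OF \<delta>] gap_\<delta>
          close_g[unfolded Lg_def] close_p[unfolded Lp_def]]
      by (simp add: K_def)
  qed
  from concentration_off_bad_events[OF finite_measure_axioms Bad_sets(3) Bad_tendsto K_tendsto this]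
  show "(\<lambda>n. measure M {\<omega> \<in> space M. arg_max (bip_post Zs E prior phat ghat X Y n \<omega>) (\<lambda>z. z \<in> Zs) \<noteq> zs})
      \<longlonglongrightarrow> 0"
    and "conv_in_prob M (\<lambda>n \<omega>. ereal (bip_post Zs E prior phat ghat X Y n \<omega> zs)) 1"
    by simp_all
qed

theorem theorem3:
  fixes p E :: nat
    and \<nu> :: "'y measure"
    and pd :: "nat \<Rightarrow> (nat \<Rightarrow> real) \<Rightarrow> 'y \<Rightarrow> real"
    and M :: "'w measure"
    and X :: "nat \<Rightarrow> nat \<Rightarrow> 'w \<Rightarrow> (nat \<Rightarrow> real)"
    and Y :: "nat \<Rightarrow> nat \<Rightarrow> 'w \<Rightarrow> 'y"
    and prior :: "nat set \<Rightarrow> real"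
    and Pmod :: "nat set \<Rightarrow> ((nat \<Rightarrow> real) \<Rightarrow> 'y \<Rightarrow> real) set"
    and phat :: "nat \<Rightarrow> nat \<Rightarrow> nat set \<Rightarrow> 'w \<Rightarrow> (nat \<Rightarrow> real) \<Rightarrow> 'y \<Rightarrow> real"
    and ghat :: "nat \<Rightarrow> nat set \<Rightarrow> 'w \<Rightarrow> (nat \<Rightarrow> real) \<Rightarrow> 'y \<Rightarrow> real"
    and zstar :: "nat set"
  assumes E_pos: "E \<ge> 1"
    and nu: "sigma_finite_measure \<nu>"
    \<comment> \<open>joint densities p_e(x,y) w.r.t. Lebesgue(R^p) x nu\<close>
    and dens_nonneg: "\<And>e x y. e < E \<Longrightarrow> 0 \<le> pd e x y"
    and dens_meas: "\<And>e. e < E \<Longrightarrow> (\<lambda>w. pd e (fst w) (snd w)) \<in> borel_measurable (Xmeas p \<Otimes>\<^sub>M \<nu>)"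
    \<comment> \<open>data: n i.i.d. draws from p_e(x,y) in each environment, independent across all (e,i)\<close>
    and M: "prob_space M"
    and data_distr: "\<And>e i. e < E \<Longrightarrow>
        distributed M (Xmeas p \<Otimes>\<^sub>M \<nu>) (\<lambda>\<omega>. (X e i \<omega>, Y e i \<omega>)) (\<lambda>w. ennreal (pd e (fst w) (snd w)))"
    and data_indep: "prob_space.indep_vars M (\<lambda>_. Xmeas p \<Otimes>\<^sub>M \<nu>)
        (\<lambda>ei \<omega>. (X (fst ei) (snd ei) \<omega>, Y (fst ei) (snd ei) \<omega>)) ({..<E} \<times> UNIV)"
    \<comment> \<open>prior on {0,1}^p\<close>
    and prior_nonneg: "\<And>z. z \<subseteq> {..<p} \<Longrightarrow> 0 \<le> prior z"
    and prior_sum: "(\<Sum>z\<in>Pow {..<p}. prior z) = 1"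
    \<comment> \<open>estimators: per-environment and pooled maximum likelihood in the model class\<close>
    and phat_in: "\<And>n e z \<omega>. e < E \<Longrightarrow> z \<subseteq> {..<p} \<Longrightarrow> phat n e z \<omega> \<in> Pmod z"
    and phat_max: "\<And>n e z \<omega> q. e < E \<Longrightarrow> z \<subseteq> {..<p} \<Longrightarrow> q \<in> Pmod z \<Longrightarrow>
        (\<Sum>i<n. elog (q (xsub z (X e i \<omega>)) (Y e i \<omega>)))
          \<le> (\<Sum>i<n. elog (phat n e z \<omega> (xsub z (X e i \<omega>)) (Y e i \<omega>)))"
    and ghat_in: "\<And>n z \<omega>. z \<subseteq> {..<p} \<Longrightarrow> ghat n z \<omega> \<in> Pmod z"
    and ghat_max: "\<And>n z \<omega> q. z \<subseteq> {..<p} \<Longrightarrow> q \<in> Pmod z \<Longrightarrow>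
        (\<Sum>e<E. \<Sum>i<n. elog (q (xsub z (X e i \<omega>)) (Y e i \<omega>)))
          \<le> (\<Sum>e<E. \<Sum>i<n. elog (ghat n z \<omega> (xsub z (X e i \<omega>)) (Y e i \<omega>)))"
    and phat_meas: "\<And>n e i z. e < E \<Longrightarrow> z \<subseteq> {..<p} \<Longrightarrow>
        (\<lambda>\<omega>. phat n e z \<omega> (xsub z (X e i \<omega>)) (Y e i \<omega>)) \<in> borel_measurable M"
    and ghat_meas: "\<And>n e i z. e < E \<Longrightarrow> z \<subseteq> {..<p} \<Longrightarrow>
        (\<lambda>\<omega>. ghat n z \<omega> (xsub z (X e i \<omega>)) (Y e i \<omega>)) \<in> borel_measurable M"
    \<comment> \<open>Invariance and uniqueness\<close>
    and zstar_sub: "zstar \<subseteq> {..<p}"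
    and invariance: "invariant_z p \<nu> E pd zstar"
    and uniqueness: "\<And>z. z \<subseteq> {..<p} \<Longrightarrow> invariant_z p \<nu> E pd z \<Longrightarrow> z = zstar"
    \<comment> \<open>Prior positivity\<close>
    and prior_pos: "prior zstar > 0"
    \<comment> \<open>Estimation consistency (the limits are finite expectations)\<close>
    and integrable_cond: "\<And>z e. z \<subseteq> {..<p} \<Longrightarrow> prior z > 0 \<Longrightarrow> e < E \<Longrightarrow>
        integrable (distr_z p \<nu> (pd e) z) (\<lambda>w. ln (cond_z p \<nu> (pd e) z (fst w) (snd w)))"
    and integrable_pooled: "\<And>z e. z \<subseteq> {..<p} \<Longrightarrow> prior z > 0 \<Longrightarrow> e < E \<Longrightarrow>
        integrable (distr_z p \<nu> (pd e) z) (\<lambda>w. ln (pooled_z p \<nu> E pd z (fst w) (snd w)))"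
    and consistent_p: "\<And>z. z \<subseteq> {..<p} \<Longrightarrow> prior z > 0 \<Longrightarrow>
        conv_in_prob M (\<lambda>n \<omega>. ereal (1 / (real n * real E)) *
            (\<Sum>i<n. \<Sum>e<E. elog (phat n e z \<omega> (xsub z (X e i \<omega>)) (Y e i \<omega>))))
          (exp_log_cond p \<nu> E pd z)"
    and consistent_g: "\<And>z. z \<subseteq> {..<p} \<Longrightarrow> prior z > 0 \<Longrightarrow>
        conv_in_prob M (\<lambda>n \<omega>. ereal (1 / (real n * real E)) *
            (\<Sum>i<n. \<Sum>e<E. elog (ghat n z \<omega> (xsub z (X e i \<omega>)) (Y e i \<omega>))))
          (exp_log_pooled p \<nu> E pd z)"
  shows "((\<lambda>n. measure M {\<omega> \<in> space M.
            arg_max (bip_post (Pow {..<p}) E prior phat ghat X Y n \<omega>) (\<lambda>z. z \<subseteq> {..<p}) \<noteq> zstar})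
           \<longlonglongrightarrow> 0)
         \<and> conv_in_prob M (\<lambda>n \<omega>. ereal (bip_post (Pow {..<p}) E prior phat ghat X Y n \<omega> zstar)) 1"
proof -
  have "joint_density p \<nu> (pd e)" if e: "e < E" for e
    using nu dens_nonneg[OF e] dens_meas[OF e]
      prob_space.distributed_nn_integral_eq_1[OF M data_distr[OF e]]
    by (simp add: joint_density_def joint_density_axioms_def)
  then interpret environments p \<nu> E pd
    by (rule environments.intro)
  have exp_log: "exp_log_pooled p \<nu> E pd z \<le> exp_log_cond p \<nu> E pd z"
    "exp_log_pooled p \<nu> E pd z = exp_log_cond p \<nu> E pd z \<longleftrightarrow> invariant_z p \<nu> E pd z"
    if "z \<subseteq> {..<p}" "0 < prior z" for z
    using exp_log_pooled_le_exp_log_cond[OF that(1)] integrable_cond[OF that] integrable_pooled[OF that]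
    by blast+
  have gap: "exp_log_pooled p \<nu> E pd z - exp_log_cond p \<nu> E pd z
      < exp_log_pooled p \<nu> E pd zstar - exp_log_cond p \<nu> E pd zstar"
    if "z \<in> Pow {..<p}" "0 < prior z" "z \<noteq> zstar" for z
    using exp_log[of z] exp_log[OF zstar_sub prior_pos] invariance uniqueness[of z] that by fastforce
  note concentration = bip_post_concentrates[where Zs="Pow {..<p}" and zs=zstar and ghat=ghat
      and phat=phat and cg="exp_log_pooled p \<nu> E pd" and cp="exp_log_cond p \<nu> E pd", OF M E_pos]
  show ?thesis
    using concentration(1) concentration(2)
      zstar_sub prior_pos prior_nonneg ghat_meas phat_meas consistent_g consistent_p gap
    by (simp add: mean_elog_def)
qed

end
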